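(* Let the words $C_n$, $D_n$ over $\{1,2\}$ be defined by $C_1=1$, $D_1=2$, $C_{k+1}=C_k\,1\,D_k$, $D_{k+1}=C_k\,2\,D_k$ for $k\ge 1$. Let $n\geq 1$ and $k\geq 1$. The number of occurrences of the subsequence $1^k$ in $C_n$ (i.e. the number of $k$-element sets of positions of $C_n$ all carrying the letter $1$) is $\binom{2^{n-1}}{k}$, and the number of occurrences of the subsequence $2^k$ in $C_n$ is $\binom{2^{n-1}-1}{k}$. Consequently the number of occurrences of the classical pattern $1^k=1\text{-}1\text{-}\cdots\text{-}1$ ($k$ letters) in $C_n$ (i.e. the number of $k$-element sets of positions of $C_n$ all carrying the same letter) equals $$\binom{2^{n-1}}{k}+\binom{2^{n-1}-1}{k},$$ and, provided $k\neq 2^{n-1}$, this equals $\frac{2^n-k}{2^{n-1}-k}\binom{2^{n-1}-1}{k}$.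
   Context: A subsequence occurrence of a word $u=u_1\cdots u_k$ in a word $w=w_1\cdots w_m$ is a choice of indices $i_1<\cdots<i_k$ with $w_{i_j}=u_j$ for all $j$. An occurrence of the (classical) pattern $1\text{-}1\text{-}\cdots\text{-}1$ of length $k$ is a choice of indices $i_1<\cdots<i_k$ such that $w_{i_1}=\cdots=w_{i_k}$. *)

theory Defs
  imports Complex_Main
begin

text \<open>The pair of words (C_k, D_k) over the alphabet {1,2}, for k \<ge> 1.
  Index 0 is an unused dummy that we set equal to index 1.\<close>
fun CD :: "nat \<Rightarrow> nat list \<times> nat list" where
  "CD 0 = ([1], [2])"
| "CD (Suc 0) = ([1], [2])"
| "CD (Suc (Suc k)) = (let (c, d) = CD (Suc k) in (c @ [1] @ d, c @ [2] @ d))"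

definition Cw :: "nat \<Rightarrow> nat list" where "Cw n = fst (CD n)"
definition Dw :: "nat \<Rightarrow> nat list" where "Dw n = snd (CD n)"

definition occ_letter :: "nat \<Rightarrow> nat \<Rightarrow> nat list \<Rightarrow> nat" where
  "occ_letter a k w = card {S. S \<subseteq> {..<length w} \<and> card S = k \<and> (\<forall>i\<in>S. w ! i = a)}"

definition occ_const_pattern :: "nat \<Rightarrow> nat list \<Rightarrow> nat" where
  "occ_const_pattern k w = card {S. S \<subseteq> {..<length w} \<and> card S = k \<and>
      (\<forall>i\<in>S. \<forall>j\<in>S. w ! i = w ! j)}"

end

theory Submission
  imports Defs
begin

text \<open>Since C(n+1) = C(n) 1 D(n) and D(n+1) = C(n) 2 D(n), induction shows that C(n) contains
  2^(n-1) ones and 2^(n-1) - 1 twos (and D(n) the other way round). An occurrence of a^k is just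
  a k-subset of the positions of the letter a, and a nonempty set of positions carrying a
  constant letter carries exactly one letter, so the pattern count is the sum of the two letter
  counts. The closed form is the absorption identity (N - k) (N choose k) = N (N - 1 choose k).\<close>

lemma Cw_Suc_Suc: "Cw (Suc (Suc m)) = Cw (Suc m) @ 1 # Dw (Suc m)"
  and Dw_Suc_Suc: "Dw (Suc (Suc m)) = Cw (Suc m) @ 2 # Dw (Suc m)"
  by (simp_all add: Cw_def Dw_def split: prod.split)

lemma set_Cw_Dw_subset: "set (Cw n) \<subseteq> {1, 2} \<and> set (Dw n) \<subseteq> {1, 2}"
proof (induction n rule: CD.induct)
  case (3 m)
  then show ?case by (auto simp: Cw_Suc_Suc Dw_Suc_Suc)
qed (simp_all add: Cw_def Dw_def)

lemma count_list_Cw_Dw: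
  "count_list (Cw (Suc m)) 1 = 2 ^ m \<and> count_list (Cw (Suc m)) 2 = 2 ^ m - 1 \<and>
   count_list (Dw (Suc m)) 1 = 2 ^ m - 1 \<and> count_list (Dw (Suc m)) 2 = 2 ^ m"
proof (induction m)
  case 0
  then show ?case by (simp add: Cw_def Dw_def)
next
  case (Suc m)
  have "(1::nat) \<le> 2 ^ m" by simp
  with Suc show ?case by (simp add: Cw_Suc_Suc Dw_Suc_Suc)
qed

lemma occ_letter_eq_count_list_choose: "occ_letter a k w = count_list w a choose k"
proof -
  have "{S. S \<subseteq> {..<length w} \<and> card S = k \<and> (\<forall>i\<in>S. w ! i = a)}
        = {S. S \<subseteq> {i. i < length w \<and> w ! i = a} \<and> card S = k}"
    by auto
  moreover have "count_list w a = card {i. i < length w \<and> w ! i = a}"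
    by (simp add: count_list_eq_length_filter length_filter_conv_card eq_commute)
  ultimately show ?thesis
    by (simp add: occ_letter_def n_subsets)
qed

lemma occ_const_pattern_eq_sum_occ_letter:
  assumes "0 < k" and "finite A" and "set w \<subseteq> A"
  shows "occ_const_pattern k w = (\<Sum>a\<in>A. occ_letter a k w)"
proof -
  define P where "P a = {S. S \<subseteq> {..<length w} \<and> card S = k \<and> (\<forall>i\<in>S. w ! i = a)}" for a
  have nonempty: "S \<noteq> {}" if "card S = k" for S :: "nat set"
    using that assms(1) by auto
  have constant_sets:
    "{S. S \<subseteq> {..<length w} \<and> card S = k \<and> (\<forall>i\<in>S. \<forall>j\<in>S. w ! i = w ! j)} = (\<Union>a\<in>A. P a)"
  proof (intro equalityI subsetI)
    fix S assume S: "S \<in> {S. S \<subseteq> {..<length w} \<and> card S = k \<and> (\<forall>i\<in>S. \<forall>j\<in>S. w ! i = w ! j)}"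
    then obtain i where "i \<in> S" using nonempty by blast
    with S have "S \<in> P (w ! i)"
      unfolding P_def by blast
    moreover from S \<open>i \<in> S\<close> have "w ! i \<in> A"
      using assms(3) nth_mem by blast
    ultimately show "S \<in> (\<Union>a\<in>A. P a)" by blast
  qed (auto simp: P_def)
  have same_letter: "a = b" if "S \<in> P a" and "S \<in> P b" for S a b
  proof -
    from that obtain i where "i \<in> S"
      using nonempty unfolding P_def by blast
    with that show ?thesis
      unfolding P_def by auto
  qed
  have "occ_const_pattern k w = card (\<Union>a\<in>A. P a)"
    unfolding occ_const_pattern_def constant_sets ..
  also have "\<dots> = (\<Sum>a\<in>A. card (P a))"
  proof (rule card_UN_disjoint)
    show "\<forall>a\<in>A. finite (P a)"
      unfolding P_def by (auto intro: finite_subset[of _ "Pow {..<length w}"])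
    show "\<forall>a\<in>A. \<forall>b\<in>A. a \<noteq> b \<longrightarrow> P a \<inter> P b = {}"
      using same_letter by blast
  qed (fact assms(2))
  also have "\<dots> = (\<Sum>a\<in>A. occ_letter a k w)"
    unfolding occ_letter_def P_def ..
  finally show ?thesis .
qed

lemma choose_add_choose_diff_one:
  fixes N k :: nat
  assumes "k \<noteq> N"
  shows "real ((N choose k) + ((N - 1) choose k)) =
     (2 * real N - real k) / (real N - real k) * real ((N - 1) choose k)"
proof (cases "k < N")
  case True
  have "real (N - k) * real (N choose k) = real N * real ((N - 1) choose k)"
    using binomial_absorb_comp[of N k] by (metis of_nat_mult)
  with True have "real (N choose k) = real N / (real N - real k) * real ((N - 1) choose k)"
    by (simp add: of_nat_diff field_simps)
  with True show ?thesis by (simp add: field_simps)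
next
  case False
  with assms have "N choose k = 0" and "(N - 1) choose k = 0" by simp_all
  then show ?thesis by (simp only: of_nat_0 mult_zero_right add_0)
qed

theorem proposition2:
  fixes n k :: nat
  assumes "n \<ge> 1" and "k \<ge> 1"
  shows "occ_letter 1 k (Cw n) = (2 ^ (n - 1)) choose k
    \<and> occ_letter 2 k (Cw n) = (2 ^ (n - 1) - 1) choose k
    \<and> occ_const_pattern k (Cw n) = ((2 ^ (n - 1)) choose k) + ((2 ^ (n - 1) - 1) choose k)
    \<and> (k \<noteq> 2 ^ (n - 1) \<longrightarrow>
         real (occ_const_pattern k (Cw n)) =
           (2 ^ n - real k) / (2 ^ (n - 1) - real k) * real ((2 ^ (n - 1) - 1) choose k))"
proof -
  obtain m where n: "n = Suc m" using assms(1) by (cases n) auto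
  have ones: "occ_letter 1 k (Cw n) = (2 ^ (n - 1)) choose k"
    and twos: "occ_letter 2 k (Cw n) = (2 ^ (n - 1) - 1) choose k"
    using count_list_Cw_Dw[of m] by (simp_all add: occ_letter_eq_count_list_choose n)
  have "occ_const_pattern k (Cw n) = occ_letter 1 k (Cw n) + occ_letter 2 k (Cw n)"
    using occ_const_pattern_eq_sum_occ_letter[of k "{1, 2}" "Cw n"] assms(2) set_Cw_Dw_subset
    by simp
  then have const:
    "occ_const_pattern k (Cw n) = ((2 ^ (n - 1)) choose k) + ((2 ^ (n - 1) - 1) choose k)"
    by (simp only: ones twos)
  have "(2::real) ^ n = 2 * real (2 ^ (n - 1))" by (simp add: n)
  then have "k \<noteq> 2 ^ (n - 1) \<longrightarrow>
      real (occ_const_pattern k (Cw n)) =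
        (2 ^ n - real k) / (2 ^ (n - 1) - real k) * real ((2 ^ (n - 1) - 1) choose k)"
    using choose_add_choose_diff_one[of k "2 ^ (n - 1)"] by (simp add: const)
  with ones twos const show ?thesis by blast
qed

end
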